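(* There exists $f\in H^2_\tau(\mathcal S)$ admitting an uncountable family of Pauli partners $g\in H^2_\tau(\mathcal S)$, no two of which are constant multiples of one another.
   Context: $\mathcal S=\{z\in\mathbb C:|\mathrm{Im}\,z|<1\}$ is the strip, and $H^2_\tau(\mathcal S)$ is the space of holomorphic functions $f$ on $\mathcal S$ with $\sup_{|y|<1}\int_{\mathbb R}|f(t+iy)|^2\,\mathrm dt<\infty$; such functions restrict to functions in $L^2(\mathbb R)$, and the Fourier transform $\widehat f$ of this restriction is defined. A Pauli partner of $f$ is a function $g$ with $|g(x)|=|f(x)|$ for all $x\in\mathbb R$ and $|\widehat g(\xi)|=|\widehat f(\xi)|$ for all $\xi\in\mathbb R$. *)

theory Defs
  imports "HOL-Analysis.Analysis"
begin

definition strip :: "complex set" where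
  "strip = {z. \<bar>Im z\<bar> < 1}"

definition H2_strip :: "(complex \<Rightarrow> complex) set" where
  "H2_strip = {f. f holomorphic_on strip \<and>
     (\<exists>C::real. \<forall>y::real. \<bar>y\<bar> < 1 \<longrightarrow>
        (\<integral>\<^sup>+ t. ennreal ((norm (f (complex_of_real t + \<i> * complex_of_real y)))\<^sup>2) \<partial>lborel) \<le> ennreal C)}"

definition fourier_trunc :: "(real \<Rightarrow> complex) \<Rightarrow> real \<Rightarrow> real \<Rightarrow> complex" where
  "fourier_trunc u R \<xi> =
     set_lebesgue_integral lborel {-R..R} (\<lambda>x. u x * cis (- 2 * pi * x * \<xi>))"

text \<open>h is (a representative of) the L^2 (Plancherel) Fourier transform of u:
  the truncated Fourier integrals converge to h in L^2(R).\<close>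
definition is_fourier_L2 :: "(real \<Rightarrow> complex) \<Rightarrow> (real \<Rightarrow> complex) \<Rightarrow> bool" where
  "is_fourier_L2 u h \<longleftrightarrow> h \<in> borel_measurable lborel \<and>
     ((\<lambda>R. \<integral>\<^sup>+ \<xi>. ennreal ((norm (fourier_trunc u R \<xi> - h \<xi>))\<^sup>2) \<partial>lborel) \<longlongrightarrow> 0) at_top"

definition restr_R :: "(complex \<Rightarrow> complex) \<Rightarrow> real \<Rightarrow> complex" where
  "restr_R f = (\<lambda>x. f (complex_of_real x))"

text \<open>Since the L^2 Fourier transform is only defined up to null sets, we ask for
  representatives whose moduli agree at every point.\<close>
definition pauli_partner :: "(complex \<Rightarrow> complex) \<Rightarrow> (complex \<Rightarrow> complex) \<Rightarrow> bool" where
  "pauli_partner f g \<longleftrightarrow>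
     (\<forall>x::real. norm (g (complex_of_real x)) = norm (f (complex_of_real x))) \<and>
     (\<exists>F G. is_fourier_L2 (restr_R f) F \<and> is_fourier_L2 (restr_R g) G \<and>
            (\<forall>\<xi>. norm (G \<xi>) = norm (F \<xi>)))"

end

theory Submission
  imports Defs "HOL-Complex_Analysis.Complex_Analysis" "HOL-Probability.Sinc_Integral"
begin

(* Let B(z) = (1 - cos (pi z)) / z^2 (fejer_entire). It is entire, bounded on the strip by a
   multiple of 1 / (1 + (Re z)^2), and its Fourier transform on the real line is a positive
   multiple of the tent max 0 (1 - 2 |xi|), which vanishes outside (-1/2, 1/2). For
   0 < r < exp (-2 pi) the Blaschke factor U(z) = (q - r) / (1 - r q) with q = exp (2 pi i z)
   (blaschke r) is holomorphic and bounded on the strip, has modulus 1 on the real line, and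
   expands as U = sum_k c_k q^k with c_0 = -r and c_k = (1 - r^2) r^(k - 1) for k > 0
   (blaschke_coeff).

   The partners are g_s(z) = B(z) U(z + s) for 0 <= s < 1 (partner s). On the real line
   |g_s| = |B|, and the Fourier transform of g_s at xi is sum_k c_k e^(2 pi i k s) \hat B(xi - k),
   in which only the term with k nearest to xi survives; so its modulus does not depend on s.
   Comparing the values at xi = 0 and xi = 1 shows that g_s = c g_t forces c = 1 and
   e^(2 pi i s) = e^(2 pi i t), i.e. s = t.

   Membership in H^2 and the L^2 Fourier transform both follow from the decay 1 / (1 + x^2) of
   g_s and, by Cauchy's estimate, of its derivative: integration by parts bounds the truncation
   error of the Fourier integral by O(min 1 (1 / |xi|)), with a constant that tends to 0. *)

section \<open>Lorentzian decay\<close>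

definition lorentzian :: "real \<Rightarrow> real" where
  "lorentzian x = inverse (1 + x\<^sup>2)"

lemma lorentzian_pos: "lorentzian x > 0"
  unfolding lorentzian_def by (simp add: add_pos_nonneg)

lemma lorentzian_le_1: "lorentzian x \<le> 1"
  unfolding lorentzian_def by (simp add: add_pos_nonneg inverse_le_1_iff)

lemma lorentzian_minus [simp]: "lorentzian (- x) = lorentzian x"
  unfolding lorentzian_def by simp

lemma borel_measurable_lorentzian [measurable]: "lorentzian \<in> borel_measurable borel"
  unfolding lorentzian_def[abs_def] by measurable

lemma integrable_lorentzian: "integrable lborel lorentzian"
  using integrable_inverse_1_plus_square
  unfolding set_integrable_def einterval_eq_UNIV lorentzian_def by simp

lemma nn_integral_cmult_lorentzian:
  assumes "c \<ge> 0"
  shows "(\<integral>\<^sup>+ x. ennreal (c * lorentzian x) \<partial>lborel) = ennreal (c * pi)"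
proof -
  have "(\<integral>\<^sup>+ x. ennreal (c * lorentzian x) \<partial>lborel) = ennreal (\<integral>x. c * lorentzian x \<partial>lborel)"
    using integrable_lorentzian assms less_imp_le[OF lorentzian_pos]
    by (intro nn_integral_eq_integral) (auto intro!: AE_I2)
  also have "(\<integral>x. c * lorentzian x \<partial>lborel) = c * pi"
    using LBINT_inverse_1_plus_square
    unfolding interval_lebesgue_integral_def set_lebesgue_integral_def einterval_eq_UNIV lorentzian_def
    by simp
  finally show ?thesis .
qed

lemma lorentzian_tendsto_0: "(lorentzian \<longlongrightarrow> 0) at_top"
proof -
  have "filterlim (\<lambda>x::real. 1 + x\<^sup>2) at_top at_top"
    by (intro filterlim_tendsto_add_at_top[OF tendsto_const] filterlim_pow_at_top filterlim_ident) simp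
  then show ?thesis
    unfolding lorentzian_def by (rule tendsto_inverse_0_at_top)
qed

lemma lorentzian_le_2_lorentzian_shift:
  assumes "\<bar>a - x\<bar> \<le> 1/2"
  shows "lorentzian a \<le> 2 * lorentzian x"
proof -
  have "2 * a\<^sup>2 + 2 * (x - a)\<^sup>2 - x\<^sup>2 = (2 * a - x)\<^sup>2"
    by (simp add: power2_eq_square algebra_simps)
  then have "x\<^sup>2 \<le> 2 * a\<^sup>2 + 2 * (x - a)\<^sup>2"
    using zero_le_power2[of "2 * a - x"] by linarith
  moreover have "(x - a)\<^sup>2 \<le> (1/2)\<^sup>2"
    using assms by (metis abs_minus_commute abs_ge_zero power2_abs power_mono)
  ultimately have "1 + x\<^sup>2 \<le> 2 * (1 + a\<^sup>2)"
    by (simp add: power2_eq_square)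
  then show ?thesis
    unfolding lorentzian_def by (simp add: add_pos_nonneg divide_simps)
qed

lemma one_le_2_lorentzian:
  assumes "x\<^sup>2 \<le> 1"
  shows "1 \<le> 2 * lorentzian x"
proof -
  have "1 \<le> 2 / (1 + x\<^sup>2)"
    using assms by (simp add: le_divide_eq add_pos_nonneg)
  then show ?thesis
    unfolding lorentzian_def by (simp add: divide_inverse)
qed

lemma inverse_square_le_2_lorentzian:
  assumes "1 \<le> x\<^sup>2"
  shows "1 / x\<^sup>2 \<le> 2 * lorentzian x"
proof -
  have "1 + x\<^sup>2 \<le> 2 * x\<^sup>2"
    using assms by simp
  then have "1 / x\<^sup>2 \<le> 2 / (1 + x\<^sup>2)"
    using assms by (simp add: divide_le_eq le_divide_eq add_pos_nonneg mult.commute)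
  then show ?thesis
    unfolding lorentzian_def by (simp add: divide_inverse)
qed

lemma nonneg_if_le_mult_lorentzian:
  assumes "0 \<le> a" and "a \<le> M * lorentzian x"
  shows "0 \<le> M"
proof -
  have "0 \<le> M * lorentzian x"
    using assms by linarith
  then show ?thesis
    using lorentzian_pos[of x] by (simp add: zero_le_mult_iff)
qed

definition lorentzian_tail :: "real \<Rightarrow> real" where
  "lorentzian_tail R = (\<integral>x\<in>{R<..}. lorentzian x \<partial>lborel)"

lemma lorentzian_tail_nonneg: "lorentzian_tail R \<ge> 0"
  unfolding lorentzian_tail_def set_lebesgue_integral_def
  using lorentzian_pos by (intro integral_nonneg_AE) (auto simp: indicator_def less_imp_le)

lemma lorentzian_tail_tendsto_0: "(lorentzian_tail \<longlongrightarrow> 0) at_top"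
proof -
  have "((\<lambda>R. integral\<^sup>L lborel (\<lambda>x. indicator {R<..} x *\<^sub>R lorentzian x))
      \<longlongrightarrow> integral\<^sup>L lborel (\<lambda>x::real. 0::real)) at_top"
  proof (rule integral_dominated_convergence_at_top[where w = lorentzian])
    show "AE x in lborel. ((\<lambda>R. indicator {R<..} x *\<^sub>R lorentzian x) \<longlongrightarrow> 0) at_top"
    proof (rule AE_I2)
      fix x :: real
      have "\<forall>\<^sub>F R in at_top. indicator {R<..} x *\<^sub>R lorentzian x = 0"
        using eventually_ge_at_top[of x] by eventually_elim (auto simp: indicator_def)
      then show "((\<lambda>R. indicator {R<..} x *\<^sub>R lorentzian x) \<longlongrightarrow> 0) at_top"
        by (rule tendsto_eventually)
    qed
    show "\<forall>\<^sub>F R in at_top. AE x in lborel. norm (indicator {R<..} x *\<^sub>R lorentzian x) \<le> lorentzian x"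
      using lorentzian_pos by (auto simp: indicator_def less_imp_le)
  qed (use integrable_lorentzian in auto)
  then show ?thesis
    unfolding lorentzian_tail_def set_lebesgue_integral_def by simp
qed

section \<open>Fourier integrals of functions with Lorentzian decay\<close>

lemma borel_measurable_cis [measurable]: "cis \<in> borel_measurable borel"
  by (intro borel_measurable_continuous_onI continuous_intros)

definition fourier_integral :: "(real \<Rightarrow> complex) \<Rightarrow> real \<Rightarrow> complex" where
  "fourier_integral u \<xi> = (\<integral>x. u x * cis (- 2 * pi * x * \<xi>) \<partial>lborel)"

lemma borel_measurable_fourier_integral:
  assumes [measurable]: "u \<in> borel_measurable borel"
  shows "fourier_integral u \<in> borel_measurable borel"
  unfolding fourier_integral_def by measurable

lemma fourier_integral_cmult: "fourier_integral (\<lambda>x. c * u x) \<xi> = c * fourier_integral u \<xi>"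
  unfolding fourier_integral_def by (simp add: mult.assoc)

lemma integrable_lorentzian_bound:
  fixes u :: "real \<Rightarrow> complex"
  assumes "u \<in> borel_measurable borel" and bound: "\<And>x. norm (u x) \<le> M * lorentzian x"
  shows "integrable lborel u"
proof (rule Bochner_Integration.integrable_bound[of _ "\<lambda>x. M * lorentzian x"])
  show "AE x in lborel. norm (u x) \<le> norm (M * lorentzian x)"
    using bound by (intro AE_I2) (metis abs_ge_self order.trans real_norm_def)
qed (use assms integrable_lorentzian in auto)

lemma integrable_mult_cis_lorentzian_bound:
  fixes u :: "real \<Rightarrow> complex"
  assumes [measurable]: "u \<in> borel_measurable borel"
    and "\<And>x. norm (u x) \<le> M * lorentzian x"
  shows "integrable lborel (\<lambda>x. u x * cis (c * x))"
  using assms by (intro integrable_lorentzian_bound[of _ M]) (auto simp: norm_mult)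

lemma norm_tail_integral_le:
  fixes u :: "real \<Rightarrow> complex"
  assumes "u \<in> borel_measurable borel" and bound: "\<And>x. norm (u x) \<le> M * lorentzian x"
  shows "norm (\<integral>x\<in>{R<..}. u x * cis (c * x) \<partial>lborel) \<le> M * lorentzian_tail R"
proof -
  have int: "set_integrable lborel {R<..} (\<lambda>x. u x * cis (c * x))"
    unfolding set_integrable_def
    by (intro integrable_mult_indicator integrable_mult_cis_lorentzian_bound[OF assms]) simp
  have int_bound: "set_integrable lborel {R<..} (\<lambda>x. M * lorentzian x)"
    unfolding set_integrable_def using integrable_lorentzian by (intro integrable_mult_indicator) auto
  have "norm (\<integral>x\<in>{R<..}. u x * cis (c * x) \<partial>lborel) \<le> (\<integral>x\<in>{R<..}. norm (u x * cis (c * x)) \<partial>lborel)"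
    by (rule set_integral_norm_bound[OF int])
  also have "\<dots> \<le> (\<integral>x\<in>{R<..}. M * lorentzian x \<partial>lborel)"
    using bound by (intro set_integral_mono[OF set_integrable_norm[OF int] int_bound]) (simp add: norm_mult)
  finally show ?thesis
    unfolding lorentzian_tail_def by simp
qed

lemma has_vector_derivative_cis_linear:
  "((\<lambda>x. cis (c * x)) has_vector_derivative (\<i> * of_real c * cis (c * x))) (at x)"
  unfolding has_vector_derivative_def
  by (auto intro!: derivative_eq_intros simp: scaleR_conv_of_real algebra_simps)

lemma set_integral_greaterThan_FTC:
  fixes f F :: "real \<Rightarrow> 'a::euclidean_space"
  assumes deriv: "\<And>x. (F has_vector_derivative f x) (at x)"
    and "continuous_on UNIV f"
    and "set_integrable lborel {R<..} f"
    and "(F \<longlongrightarrow> 0) at_top"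
  shows "(\<integral>x\<in>{R<..}. f x \<partial>lborel) = - F R"
proof -
  have "continuous_on UNIV F"
    using deriv by (intro continuous_at_imp_continuous_on ballI has_vector_derivative_continuous)
  then have "interval_lebesgue_integral lborel (ereal R) \<infinity> f = 0 - F R"
    using assms
    by (intro interval_integral_FTC_integrable[where F = F])
      (auto simp: continuous_on_eq_continuous_at isCont_def einterval_eq_Ici ereal_tendsto_simps
        intro: tendsto_mono[OF at_within_le_at])
  then show ?thesis
    unfolding interval_lebesgue_integral_def einterval_eq_Ici by simp
qed

lemma tail_integral_by_parts:
  fixes u u' :: "real \<Rightarrow> complex"
  assumes deriv: "\<And>x. (u has_vector_derivative u' x) (at x)"
    and cont': "continuous_on UNIV u'"
    and bound: "\<And>x. norm (u x) \<le> M * lorentzian x"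
    and bound': "\<And>x. norm (u' x) \<le> M' * lorentzian x"
    and "c \<noteq> 0"
  shows "(\<integral>x\<in>{R<..}. u x * cis (c * x) \<partial>lborel)
           = - (u R * cis (c * R) + (\<integral>x\<in>{R<..}. u' x * cis (c * x) \<partial>lborel)) / (\<i> * of_real c)"
proof -
  define k where "k = \<i> * complex_of_real c"
  have "k \<noteq> 0"
    using \<open>c \<noteq> 0\<close> by (simp add: k_def)
  define \<Phi> where "\<Phi> x = u x * cis (c * x) / k" for x
  define \<phi> where "\<phi> x = u' x * cis (c * x) / k + u x * cis (c * x)" for x
  have "continuous_on UNIV u"
    using deriv by (intro continuous_at_imp_continuous_on ballI has_vector_derivative_continuous)
  then have [measurable]: "u \<in> borel_measurable borel" "u' \<in> borel_measurable borel"
    using cont' by (auto intro: borel_measurable_continuous_onI)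
  have "(\<Phi> has_vector_derivative \<phi> x) (at x)" for x
  proof -
    have "((\<lambda>x. u x * cis (c * x) / k) has_vector_derivative
            (u x * (\<i> * of_real c * cis (c * x)) + u' x * cis (c * x)) / k) (at x)"
      by (intro has_vector_derivative_divide has_vector_derivative_mult deriv
          has_vector_derivative_cis_linear)
    then show ?thesis
      using \<open>k \<noteq> 0\<close> unfolding \<Phi>_def \<phi>_def k_def by (simp add: field_simps)
  qed
  moreover have "continuous_on UNIV \<phi>"
    unfolding \<phi>_def using \<open>k \<noteq> 0\<close> \<open>continuous_on UNIV u\<close> cont' by (auto intro!: continuous_intros)
  moreover have int: "set_integrable lborel {R<..} (\<lambda>x. u x * cis (c * x))"
    "set_integrable lborel {R<..} (\<lambda>x. u' x * cis (c * x) / k)"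
    unfolding set_integrable_def
    using integrable_mult_cis_lorentzian_bound[OF _ bound] integrable_mult_cis_lorentzian_bound[OF _ bound']
    by (auto intro: integrable_mult_indicator)
  moreover have "(\<Phi> \<longlongrightarrow> 0) at_top"
  proof (rule Lim_null_comparison)
    show "\<forall>\<^sub>F x in at_top. norm (\<Phi> x) \<le> M * lorentzian x / \<bar>c\<bar>"
      using bound by (simp add: \<Phi>_def k_def norm_mult norm_divide divide_right_mono)
    show "((\<lambda>x. M * lorentzian x / \<bar>c\<bar>) \<longlongrightarrow> 0) at_top"
      using tendsto_mult[OF tendsto_const[of M] lorentzian_tendsto_0] by (auto intro: tendsto_divide_zero)
  qed
  ultimately have "(\<integral>x\<in>{R<..}. \<phi> x \<partial>lborel) = - \<Phi> R"
    by (intro set_integral_greaterThan_FTC) (auto simp: \<phi>_def intro: set_integral_add)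
  moreover have "(\<integral>x\<in>{R<..}. \<phi> x \<partial>lborel)
      = (\<integral>x\<in>{R<..}. u' x * cis (c * x) \<partial>lborel) / k + (\<integral>x\<in>{R<..}. u x * cis (c * x) \<partial>lborel)"
    unfolding \<phi>_def set_integral_add(2)[OF int(2,1)] set_integral_divide_zero ..
  ultimately have "(\<integral>x\<in>{R<..}. u x * cis (c * x) \<partial>lborel)
      = - u R * cis (c * R) / k - (\<integral>x\<in>{R<..}. u' x * cis (c * x) \<partial>lborel) / k"
    unfolding \<Phi>_def by (simp add: algebra_simps)
  then show ?thesis
    unfolding k_def by (simp add: diff_divide_distrib)
qed

lemma norm_tail_integral_le_by_parts:
  fixes u u' :: "real \<Rightarrow> complex"
  assumes deriv: "\<And>x. (u has_vector_derivative u' x) (at x)"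
    and cont': "continuous_on UNIV u'"
    and bound: "\<And>x. norm (u x) \<le> M * lorentzian x"
    and bound': "\<And>x. norm (u' x) \<le> M' * lorentzian x"
    and "c \<noteq> 0"
  shows "norm (\<integral>x\<in>{R<..}. u x * cis (c * x) \<partial>lborel) \<le> (norm (u R) + M' * lorentzian_tail R) / \<bar>c\<bar>"
proof -
  have "u' \<in> borel_measurable borel"
    using cont' by (rule borel_measurable_continuous_onI)
  then have "norm (u R * cis (c * R) + (\<integral>x\<in>{R<..}. u' x * cis (c * x) \<partial>lborel)) \<le> norm (u R) + M' * lorentzian_tail R"
    using norm_tail_integral_le[OF _ bound'] by (intro norm_triangle_le add_mono) (auto simp: norm_mult)
  then show ?thesis
    unfolding tail_integral_by_parts[OF assms] norm_divide norm_minus_cancel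
    by (simp add: norm_mult divide_right_mono)
qed

lemma integral_split_tails:
  fixes f :: "real \<Rightarrow> 'a::{banach, second_countable_topology}"
  assumes "integrable lborel f" and "R \<ge> 0"
  shows "(\<integral>x. f x \<partial>lborel)
           = (\<integral>x\<in>{-R..R}. f x \<partial>lborel) + (\<integral>x\<in>{R<..}. f x \<partial>lborel) + (\<integral>x\<in>{R<..}. f (- x) \<partial>lborel)"
proof -
  have "(\<integral>x\<in>{R<..}. f (- x) \<partial>lborel) = (\<integral>x\<in>{..<-R}. f x \<partial>lborel)"
    using set_integral_reflect[of "{..<-R}" f] by (simp add: greaterThan_def)
  moreover have "f = (\<lambda>x. indicator {-R..R} x *\<^sub>R f x + indicator {R<..} x *\<^sub>R f x + indicator {..<-R} x *\<^sub>R f x)"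
    using \<open>R \<ge> 0\<close> by (auto simp: fun_eq_iff indicator_def)
  then have "(\<integral>x. f x \<partial>lborel) = (\<integral>x. indicator {-R..R} x *\<^sub>R f x + indicator {R<..} x *\<^sub>R f x + indicator {..<-R} x *\<^sub>R f x \<partial>lborel)"
    by (metis (no_types))
  ultimately show ?thesis
    using assms(1) unfolding set_lebesgue_integral_def
    by (simp add: integrable_mult_indicator)
qed

lemma fourier_integral_minus_trunc:
  fixes u :: "real \<Rightarrow> complex"
  assumes "integrable lborel (\<lambda>x. u x * cis (- 2 * pi * x * \<xi>))" and "R \<ge> 0"
  shows "fourier_integral u \<xi> - fourier_trunc u R \<xi>
           = (\<integral>x\<in>{R<..}. u x * cis ((- 2 * pi * \<xi>) * x) \<partial>lborel)
             + (\<integral>x\<in>{R<..}. u (- x) * cis ((2 * pi * \<xi>) * x) \<partial>lborel)"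
  using integral_split_tails[OF assms] unfolding fourier_integral_def fourier_trunc_def
  by (simp add: mult_ac)

lemma norm_fourier_trunc_error_le:
  fixes u u' :: "real \<Rightarrow> complex"
  assumes deriv: "\<And>x. (u has_vector_derivative u' x) (at x)"
    and cont': "continuous_on UNIV u'"
    and bound: "\<And>x. norm (u x) \<le> M * lorentzian x"
    and bound': "\<And>x. norm (u' x) \<le> M' * lorentzian x"
    and "R \<ge> 0"
  shows "norm (fourier_integral u \<xi> - fourier_trunc u R \<xi>) \<le> 2 * M * lorentzian_tail R"
    and "\<xi> \<noteq> 0 \<Longrightarrow> norm (fourier_integral u \<xi> - fourier_trunc u R \<xi>)
           \<le> (M * lorentzian R + M' * lorentzian_tail R) / (pi * \<bar>\<xi>\<bar>)"
proof -
  define v where "v x = u (- x)" for x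
  define v' where "v' x = - u' (- x)" for x
  have deriv_v: "(v has_vector_derivative v' x) (at x)" for x
    using vector_diff_chain_at[OF has_vector_derivative_minus[OF has_vector_derivative_id] deriv]
    by (simp add: v_def[abs_def] v'_def o_def)
  have cont'_v: "continuous_on UNIV v'"
    unfolding v'_def by (intro continuous_intros continuous_on_compose2[OF cont']) auto
  have bound_v: "norm (v x) \<le> M * lorentzian x" and bound'_v: "norm (v' x) \<le> M' * lorentzian x" for x
    using bound[of "- x"] bound'[of "- x"] by (simp_all add: v_def v'_def)
  have "continuous_on UNIV u" "continuous_on UNIV v"
    using deriv deriv_v by (auto intro!: continuous_at_imp_continuous_on has_vector_derivative_continuous)
  then have meas: "u \<in> borel_measurable borel" "v \<in> borel_measurable borel"
    by (auto intro: borel_measurable_continuous_onI)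
  have split: "fourier_integral u \<xi> - fourier_trunc u R \<xi>
      = (\<integral>x\<in>{R<..}. u x * cis ((- 2 * pi * \<xi>) * x) \<partial>lborel)
        + (\<integral>x\<in>{R<..}. v x * cis ((2 * pi * \<xi>) * x) \<partial>lborel)"
    unfolding v_def
    using integrable_mult_cis_lorentzian_bound[OF meas(1) bound, of "- 2 * pi * \<xi>"] \<open>R \<ge> 0\<close>
    by (intro fourier_integral_minus_trunc) (simp_all add: mult_ac)
  show "norm (fourier_integral u \<xi> - fourier_trunc u R \<xi>) \<le> 2 * M * lorentzian_tail R"
    unfolding split
    using norm_tail_integral_le[OF meas(1) bound, of R "- 2 * pi * \<xi>"]
      norm_tail_integral_le[OF meas(2) bound_v, of R "2 * pi * \<xi>"]
    by (intro norm_triangle_le) linarith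
  assume "\<xi> \<noteq> 0"
  then have "norm (fourier_integral u \<xi> - fourier_trunc u R \<xi>)
      \<le> (norm (u R) + M' * lorentzian_tail R) / \<bar>- 2 * pi * \<xi>\<bar> + (norm (v R) + M' * lorentzian_tail R) / \<bar>2 * pi * \<xi>\<bar>"
    unfolding split
    by (intro norm_triangle_le add_mono norm_tail_integral_le_by_parts[OF deriv cont' bound bound']
        norm_tail_integral_le_by_parts[OF deriv_v cont'_v bound_v bound'_v]) simp_all
  also have "\<dots> = (norm (u R) + norm (v R) + 2 * (M' * lorentzian_tail R)) / (2 * pi * \<bar>\<xi>\<bar>)"
    by (simp add: abs_mult add_divide_distrib)
  also have "\<dots> \<le> (2 * (M * lorentzian R) + 2 * (M' * lorentzian_tail R)) / (2 * pi * \<bar>\<xi>\<bar>)"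
    using bound[of R] bound_v[of R] by (intro divide_right_mono) auto
  also have "\<dots> = (M * lorentzian R + M' * lorentzian_tail R) / (pi * \<bar>\<xi>\<bar>)"
    by (simp only: distrib_left[symmetric] mult.assoc mult_divide_mult_cancel_left_if) simp
  finally show "norm (fourier_integral u \<xi> - fourier_trunc u R \<xi>)
           \<le> (M * lorentzian R + M' * lorentzian_tail R) / (pi * \<bar>\<xi>\<bar>)" .
qed

lemma fourier_trunc_error_sq_le:
  fixes u u' :: "real \<Rightarrow> complex"
  assumes deriv: "\<And>x. (u has_vector_derivative u' x) (at x)"
    and cont': "continuous_on UNIV u'"
    and bound: "\<And>x. norm (u x) \<le> M * lorentzian x"
    and bound': "\<And>x. norm (u' x) \<le> M' * lorentzian x"
    and "R \<ge> 0"
  defines "e \<equiv> 2 * M * lorentzian_tail R + M * lorentzian R + M' * lorentzian_tail R"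
  shows "(norm (fourier_trunc u R \<xi> - fourier_integral u \<xi>))\<^sup>2 \<le> 2 * e\<^sup>2 * lorentzian \<xi>"
proof -
  define N where "N = norm (fourier_trunc u R \<xi> - fourier_integral u \<xi>)"
  note error_le = norm_fourier_trunc_error_le[OF assms(1-5), of \<xi>, unfolded norm_minus_commute[of "fourier_integral u \<xi>"]]
  have "M \<ge> 0" "M' \<ge> 0"
    using nonneg_if_le_mult_lorentzian[OF norm_ge_zero bound] nonneg_if_le_mult_lorentzian[OF norm_ge_zero bound']
    by blast+
  then have "0 \<le> M * lorentzian R + M' * lorentzian_tail R"
    using lorentzian_pos[of R] lorentzian_tail_nonneg[of R] by simp
  have "N \<le> e"
    using error_le(1) \<open>0 \<le> M * lorentzian R + M' * lorentzian_tail R\<close> unfolding N_def e_def by linarith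
  show ?thesis
  proof (cases "\<xi>\<^sup>2 \<le> 1")
    case True
    have "N\<^sup>2 \<le> e\<^sup>2"
      using \<open>N \<le> e\<close> unfolding N_def by (simp add: power_mono)
    also have "\<dots> \<le> e\<^sup>2 * (2 * lorentzian \<xi>)"
      using one_le_2_lorentzian[OF True] by (simp add: mult_le_cancel_left1)
    finally show ?thesis
      unfolding N_def by (simp add: mult_ac)
  next
    case False
    then have "\<xi> \<noteq> 0" "1 \<le> \<bar>\<xi>\<bar>"
      using abs_square_le_1 by force+
    have "N \<le> (M * lorentzian R + M' * lorentzian_tail R) / (pi * \<bar>\<xi>\<bar>)"
      using error_le(2)[OF \<open>\<xi> \<noteq> 0\<close>] unfolding N_def .
    also have "\<dots> \<le> (M * lorentzian R + M' * lorentzian_tail R) / \<bar>\<xi>\<bar>"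
      using \<open>0 \<le> M * lorentzian R + M' * lorentzian_tail R\<close> \<open>\<xi> \<noteq> 0\<close> pi_ge_two
      by (intro divide_left_mono) auto
    also have "\<dots> \<le> e / \<bar>\<xi>\<bar>"
      unfolding e_def using \<open>M \<ge> 0\<close> lorentzian_tail_nonneg[of R] by (intro divide_right_mono) auto
    finally have "N\<^sup>2 \<le> (e / \<bar>\<xi>\<bar>)\<^sup>2"
      unfolding N_def by (simp add: power_mono)
    also have "\<dots> = e\<^sup>2 * (1 / \<xi>\<^sup>2)"
      by (simp add: power_divide)
    also have "\<dots> \<le> e\<^sup>2 * (2 * lorentzian \<xi>)"
      using False inverse_square_le_2_lorentzian[of \<xi>] by (intro mult_left_mono) auto
    finally show ?thesis
      unfolding N_def by (simp add: mult_ac)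
  qed
qed

lemma is_fourier_L2_fourier_integral:
  fixes u u' :: "real \<Rightarrow> complex"
  assumes deriv: "\<And>x. (u has_vector_derivative u' x) (at x)"
    and cont': "continuous_on UNIV u'"
    and bound: "\<And>x. norm (u x) \<le> M * lorentzian x"
    and bound': "\<And>x. norm (u' x) \<le> M' * lorentzian x"
  shows "is_fourier_L2 u (fourier_integral u)"
  unfolding is_fourier_L2_def
proof
  have "continuous_on UNIV u"
    using deriv by (auto intro!: continuous_at_imp_continuous_on has_vector_derivative_continuous)
  then show "fourier_integral u \<in> borel_measurable lborel"
    by (auto intro: borel_measurable_fourier_integral borel_measurable_continuous_onI)
  define e where "e R = 2 * M * lorentzian_tail R + M * lorentzian R + M' * lorentzian_tail R" for R
  have upper: "\<forall>\<^sub>F R in at_top. (\<integral>\<^sup>+ \<xi>. ennreal ((norm (fourier_trunc u R \<xi> - fourier_integral u \<xi>))\<^sup>2) \<partial>lborel)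
          \<le> ennreal (2 * (e R)\<^sup>2 * pi)"
    using eventually_ge_at_top[of "0::real"]
  proof eventually_elim
    case (elim R)
    have "(\<integral>\<^sup>+ \<xi>. ennreal ((norm (fourier_trunc u R \<xi> - fourier_integral u \<xi>))\<^sup>2) \<partial>lborel)
        \<le> (\<integral>\<^sup>+ \<xi>. ennreal (2 * (e R)\<^sup>2 * lorentzian \<xi>) \<partial>lborel)"
      using fourier_trunc_error_sq_le[OF deriv cont' bound bound' elim]
      by (intro nn_integral_mono ennreal_leI) (simp add: e_def)
    also have "\<dots> = ennreal (2 * (e R)\<^sup>2 * pi)"
      by (simp add: nn_integral_cmult_lorentzian)
    finally show ?case .
  qed
  have lim: "((\<lambda>R. ennreal (2 * (e R)\<^sup>2 * pi)) \<longlongrightarrow> 0) at_top"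
  proof -
    have "(e \<longlongrightarrow> 2 * M * 0 + M * 0 + M' * 0) at_top"
      unfolding e_def[abs_def] by (intro tendsto_intros lorentzian_tendsto_0 lorentzian_tail_tendsto_0)
    then have "((\<lambda>R. 2 * (e R)\<^sup>2 * pi) \<longlongrightarrow> 2 * 0\<^sup>2 * pi) at_top"
      by (intro tendsto_intros) simp
    then show ?thesis
      using tendsto_ennrealI by fastforce
  qed
  show "((\<lambda>R. \<integral>\<^sup>+ \<xi>. ennreal ((norm (fourier_trunc u R \<xi> - fourier_integral u \<xi>))\<^sup>2) \<partial>lborel)
      \<longlongrightarrow> 0) at_top"
    by (rule tendsto_sandwich[OF _ upper tendsto_const lim]) simp
qed

section \<open>Holomorphic functions with Lorentzian decay on the strip\<close>

lemma open_strip: "open strip"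
  unfolding strip_def
  by (rule open_Collect_less[of "\<lambda>z. \<bar>Im z\<bar>" "\<lambda>_. 1", simplified]) (intro continuous_intros)

lemma of_real_in_strip [simp]: "complex_of_real x \<in> strip"
  by (simp add: strip_def)

lemma add_of_real_in_strip: "z \<in> strip \<Longrightarrow> z + complex_of_real s \<in> strip"
  by (simp add: strip_def)

lemma H2_stripI_lorentzian_bound:
  fixes f :: "complex \<Rightarrow> complex"
  assumes "f holomorphic_on strip"
    and bound: "\<And>z. z \<in> strip \<Longrightarrow> norm (f z) \<le> M * lorentzian (Re z)"
  shows "f \<in> H2_strip"
  unfolding H2_strip_def
proof (intro CollectI conjI exI allI impI)
  fix y :: real
  assume "\<bar>y\<bar> < 1"
  then have on_line: "norm (f (of_real t + \<i> * of_real y)) \<le> M * lorentzian t" for t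
    using bound[of "of_real t + \<i> * of_real y"] by (simp add: strip_def)
  have "(norm (f (of_real t + \<i> * of_real y)))\<^sup>2 \<le> M\<^sup>2 * lorentzian t" for t
  proof -
    have "(norm (f (of_real t + \<i> * of_real y)))\<^sup>2 \<le> (M * lorentzian t)\<^sup>2"
      using on_line by (rule power_mono) simp
    also have "\<dots> = M\<^sup>2 * (lorentzian t * lorentzian t)"
      by (simp add: power2_eq_square)
    also have "\<dots> \<le> M\<^sup>2 * lorentzian t"
      using lorentzian_le_1[of t] lorentzian_pos[of t] by (intro mult_left_mono) (auto simp: mult_le_cancel_right1)
    finally show ?thesis .
  qed
  then have "(\<integral>\<^sup>+ t. ennreal ((norm (f (of_real t + \<i> * of_real y)))\<^sup>2) \<partial>lborel)
      \<le> (\<integral>\<^sup>+ t. ennreal (M\<^sup>2 * lorentzian t) \<partial>lborel)"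
    by (intro nn_integral_mono ennreal_leI)
  also have "\<dots> = ennreal (M\<^sup>2 * pi)"
    by (simp add: nn_integral_cmult_lorentzian)
  finally show "(\<integral>\<^sup>+ t. ennreal ((norm (f (of_real t + \<i> * of_real y)))\<^sup>2) \<partial>lborel) \<le> ennreal (M\<^sup>2 * pi)" .
qed (rule assms(1))

lemma norm_deriv_le_lorentzian_bound:
  fixes f :: "complex \<Rightarrow> complex"
  assumes hol: "f holomorphic_on strip"
    and bound: "\<And>z. z \<in> strip \<Longrightarrow> norm (f z) \<le> M * lorentzian (Re z)"
  shows "norm (deriv f (of_real x)) \<le> 4 * M * lorentzian x"
proof -
  have "M \<ge> 0"
    using bound[of 0] by (intro nonneg_if_le_mult_lorentzian[OF norm_ge_zero]) (simp add: strip_def)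
  have disc: "cball (complex_of_real x) (1/2) \<subseteq> strip"
  proof
    fix z assume "z \<in> cball (complex_of_real x) (1/2)"
    then have "\<bar>Im (z - of_real x)\<bar> \<le> 1/2"
      using abs_Im_le_cmod[of "z - of_real x"] by (simp add: dist_norm norm_minus_commute)
    then show "z \<in> strip"
      by (simp add: strip_def)
  qed
  have "norm ((deriv ^^ 1) f (of_real x)) \<le> fact 1 * (2 * M * lorentzian x) / (1/2) ^ 1"
  proof (rule Cauchy_inequality)
    show "f holomorphic_on ball (of_real x) (1/2)"
      using hol disc ball_subset_cball holomorphic_on_subset by blast
    show "continuous_on (cball (of_real x) (1/2)) f"
      using holomorphic_on_imp_continuous_on[OF hol] disc continuous_on_subset by blast
    fix z :: complex
    assume z: "norm (of_real x - z) = 1/2"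
    then have "\<bar>Re z - x\<bar> \<le> 1/2"
      using abs_Re_le_cmod[of "of_real x - z"] by (simp add: abs_minus_commute)
    then have "M * lorentzian (Re z) \<le> M * (2 * lorentzian x)"
      using \<open>M \<ge> 0\<close> by (intro mult_left_mono lorentzian_le_2_lorentzian_shift)
    moreover have "z \<in> strip"
      using disc z by (auto simp: dist_norm)
    ultimately show "norm (f z) \<le> 2 * M * lorentzian x"
      using bound[of z] by simp
  qed simp
  then show ?thesis
    by simp
qed

lemma is_fourier_L2_lorentzian_bound:
  fixes f :: "complex \<Rightarrow> complex"
  assumes hol: "f holomorphic_on strip"
    and bound: "\<And>z. z \<in> strip \<Longrightarrow> norm (f z) \<le> M * lorentzian (Re z)"
  shows "is_fourier_L2 (restr_R f) (fourier_integral (restr_R f))"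
proof (rule is_fourier_L2_fourier_integral)
  show "(restr_R f has_vector_derivative deriv f (of_real x)) (at x)" for x
    unfolding restr_R_def
    by (intro has_vector_derivative_real_field holomorphic_derivI[OF hol open_strip]) simp
  show "continuous_on UNIV (\<lambda>x. deriv f (of_real x))"
    using holomorphic_on_imp_continuous_on[OF holomorphic_deriv[OF hol open_strip]]
    by (rule continuous_on_compose2) (auto intro: continuous_intros)
  show "norm (restr_R f x) \<le> M * lorentzian x" for x
    using bound[of "of_real x"] by (simp add: restr_R_def)
  show "norm (deriv f (of_real x)) \<le> (4 * M) * lorentzian x" for x
    using norm_deriv_le_lorentzian_bound[OF assms] by simp
qed

section \<open>Multiplication by an absolutely convergent Fourier series\<close>

lemma integral_mult_series_sums:
  fixes v h :: "'a \<Rightarrow> complex" and e :: "nat \<Rightarrow> 'a \<Rightarrow> complex" and a :: "nat \<Rightarrow> complex"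
  assumes v: "integrable M v"
    and [measurable]: "\<And>k. e k \<in> borel_measurable M"
    and e_bound: "\<And>k x. norm (e k x) \<le> 1"
    and a: "summable (\<lambda>k. norm (a k))"
    and h: "\<And>x. (\<lambda>k. a k * e k x) sums h x"
  shows "(\<lambda>k. a k * (\<integral>x. v x * e k x \<partial>M)) sums (\<integral>x. v x * h x \<partial>M)"
proof -
  define S where "S N x = v x * (\<Sum>k<N. a k * e k x)" for N x
  have [measurable]: "v \<in> borel_measurable M"
    using v by (rule borel_measurable_integrable)
  have term_bound: "norm (v x * (a k * e k x)) \<le> norm (a k) * norm (v x)" for k x
  proof -
    have "norm (v x * (a k * e k x)) = norm (a k) * norm (v x) * norm (e k x)"
      by (simp add: norm_mult mult_ac)
    also have "\<dots> \<le> norm (a k) * norm (v x)"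
      using e_bound by (intro mult_left_le) auto
    finally show ?thesis .
  qed
  have int_term: "integrable M (\<lambda>x. v x * (a k * e k x))" for k
    by (intro Bochner_Integration.integrable_bound[OF integrable_mult_right[OF integrable_norm[OF v], of "norm (a k)"]]
        AE_I2) (simp_all add: term_bound abs_mult)
  have partial_sums: "(\<Sum>k<N. a k * (\<integral>x. v x * e k x \<partial>M)) = (\<integral>x. S N x \<partial>M)" for N
    unfolding S_def sum_distrib_left using int_term
    by (simp add: Bochner_Integration.integral_sum mult.left_commute)
  have partial_sums_h: "(\<lambda>N. \<Sum>k<N. a k * e k x) \<longlonglongrightarrow> h x" for x
    using h[of x] unfolding sums_def .
  have [measurable]: "h \<in> borel_measurable M"
    by (rule borel_measurable_LIMSEQ_metric[of "\<lambda>N x. \<Sum>k<N. a k * e k x", OF _ partial_sums_h])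
      measurable
  have "(\<lambda>N. \<integral>x. S N x \<partial>M) \<longlonglongrightarrow> (\<integral>x. v x * h x \<partial>M)"
  proof (rule integral_dominated_convergence[where w = "\<lambda>x. norm (v x) * (\<Sum>k. norm (a k))"])
    show "(\<lambda>x. v x * h x) \<in> borel_measurable M" "S N \<in> borel_measurable M" for N
      unfolding S_def by measurable
    show "integrable M (\<lambda>x. norm (v x) * (\<Sum>k. norm (a k)))"
      using v by (intro integrable_mult_left integrable_norm)
    show "AE x in M. (\<lambda>N. S N x) \<longlonglongrightarrow> v x * h x"
      unfolding S_def using partial_sums_h by (intro AE_I2 tendsto_mult_left)
    show "AE x in M. norm (S N x) \<le> norm (v x) * (\<Sum>k. norm (a k))" for N
    proof (rule AE_I2)
      fix x
      have "norm (\<Sum>k<N. a k * e k x) \<le> (\<Sum>k<N. norm (a k))"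
        using e_bound by (intro order.trans[OF norm_sum] sum_mono) (auto simp: norm_mult intro: mult_left_le)
      also have "\<dots> \<le> (\<Sum>k. norm (a k))"
        using a by (intro sum_le_suminf) auto
      finally show "norm (S N x) \<le> norm (v x) * (\<Sum>k. norm (a k))"
        unfolding S_def norm_mult by (intro mult_left_mono) auto
    qed
  qed
  then show ?thesis
    unfolding sums_def partial_sums .
qed

lemma fourier_integral_mult_fourier_series:
  fixes u h :: "real \<Rightarrow> complex" and a :: "nat \<Rightarrow> complex" and \<xi> :: real
  assumes u: "integrable lborel u"
    and a: "summable (\<lambda>k. norm (a k))"
    and h: "\<And>x. (\<lambda>k. a k * cis (2 * pi * k * x)) sums h x"
  shows "(\<lambda>k. a k * fourier_integral u (\<xi> - real k)) sums fourier_integral (\<lambda>x. u x * h x) \<xi>"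
proof -
  define v where "v x = u x * cis (- 2 * pi * x * \<xi>)" for x
  have "u \<in> borel_measurable borel"
    using borel_measurable_integrable[OF u] by simp
  then have "integrable lborel v"
    unfolding v_def by (intro Bochner_Integration.integrable_bound[OF u]) (auto simp: norm_mult)
  moreover have "(\<lambda>x. cis (2 * pi * k * x)) \<in> borel_measurable lborel" for k :: nat
    by measurable
  ultimately have "(\<lambda>k. a k * (\<integral>x. v x * cis (2 * pi * k * x) \<partial>lborel)) sums (\<integral>x. v x * h x \<partial>lborel)"
    using a h by (intro integral_mult_series_sums) auto
  moreover have "u x * cis (- 2 * pi * x * (\<xi> - real k)) = v x * cis (2 * pi * k * x)" for x k
    unfolding v_def by (simp add: cis_mult algebra_simps)
  then have "fourier_integral u (\<xi> - real k) = (\<integral>x. v x * cis (2 * pi * k * x) \<partial>lborel)" for k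
    unfolding fourier_integral_def by simp
  moreover have "fourier_integral (\<lambda>x. u x * h x) \<xi> = (\<integral>x. v x * h x \<partial>lborel)"
    unfolding fourier_integral_def v_def by (simp add: mult_ac)
  ultimately show ?thesis
    by simp
qed

section \<open>The Fejer function\<close>

definition fejer :: "real \<Rightarrow> real \<Rightarrow> real" where
  "fejer c x = (1 - cos (c * x)) / x\<^sup>2"

lemma fejer_nonneg: "0 \<le> fejer c x"
  unfolding fejer_def by simp

lemma one_minus_cos_le: "1 - cos t \<le> t\<^sup>2 / 2" for t :: real
proof -
  have "1 - cos t = 2 * (sin (t / 2))\<^sup>2"
    using cos_double_sin[of "t / 2"] by simp
  moreover have "(sin (t / 2))\<^sup>2 \<le> (t / 2)\<^sup>2"
    using abs_sin_x_le_abs_x[of "t / 2"] by (metis abs_ge_zero power2_abs power_mono)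
  ultimately show ?thesis
    by (simp add: power_divide)
qed

lemma fejer_le_lorentzian: "fejer c x \<le> (c\<^sup>2 + 4) * lorentzian x"
proof (cases "x = 0")
  case True
  then show ?thesis
    using lorentzian_pos[of x] by (simp add: fejer_def add_pos_nonneg)
next
  case False
  have "x\<^sup>2 > 0" and lorentzian_eq: "lorentzian x = 1 / (1 + x\<^sup>2)"
    using False by (simp_all add: lorentzian_def divide_inverse)
  show ?thesis
  proof (cases "x\<^sup>2 \<le> 1")
    case True
    have "fejer c x \<le> ((c * x)\<^sup>2 / 2) / x\<^sup>2"
      unfolding fejer_def by (rule divide_right_mono[OF one_minus_cos_le]) simp
    also have "\<dots> = c\<^sup>2 / 2"
      using \<open>x\<^sup>2 > 0\<close> by (simp add: power_mult_distrib)
    also have "\<dots> \<le> (c\<^sup>2 + 4) / (1 + x\<^sup>2)"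
      using True by (intro frac_le) (auto simp: add_pos_nonneg)
    finally show ?thesis
      by (simp add: lorentzian_eq)
  next
    case False
    have "fejer c x \<le> 2 / x\<^sup>2"
      unfolding fejer_def by (rule divide_right_mono) (auto simp: cos_ge_minus_one)
    also have "\<dots> \<le> 4 / (1 + x\<^sup>2)"
      using False \<open>x\<^sup>2 > 0\<close> by (simp add: frac_le divide_simps)
    also have "\<dots> \<le> (c\<^sup>2 + 4) / (1 + x\<^sup>2)"
      by (intro divide_right_mono) (auto simp: add_pos_nonneg)
    finally show ?thesis
      by (simp add: lorentzian_eq)
  qed
qed

lemma borel_measurable_fejer [measurable]: "fejer c \<in> borel_measurable borel"
  unfolding fejer_def[abs_def] by measurable

lemma integrable_fejer: "integrable lborel (fejer c)"
proof (rule Bochner_Integration.integrable_bound[of _ "\<lambda>x. (c\<^sup>2 + 4) * lorentzian x"])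
  show "AE x in lborel. norm (fejer c x) \<le> norm ((c\<^sup>2 + 4) * lorentzian x)"
    using fejer_le_lorentzian fejer_nonneg lorentzian_pos
    by (auto intro!: AE_I2 simp: abs_mult add_pos_nonneg less_imp_le)
qed (use integrable_lorentzian in auto)

definition fejer_const :: real where
  "fejer_const = integral\<^sup>L lborel (fejer 1)"

lemma integral_fejer: "integral\<^sup>L lborel (fejer c) = \<bar>c\<bar> * fejer_const"
proof (cases "c = 0")
  case True
  then show ?thesis
    by (simp add: fejer_def[abs_def])
next
  case False
  have "fejer_const = \<bar>c\<bar> * integral\<^sup>L lborel (\<lambda>x. fejer 1 (0 + c * x))"
    unfolding fejer_const_def using lborel_integral_real_affine[OF False, of "fejer 1" 0] by simp
  also have "(\<lambda>x. fejer 1 (0 + c * x)) = (\<lambda>x. fejer c x / c\<^sup>2)"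
    by (auto simp: fun_eq_iff fejer_def power_mult_distrib)
  also have "\<bar>c\<bar> * integral\<^sup>L lborel (\<lambda>x. fejer c x / c\<^sup>2) = integral\<^sup>L lborel (fejer c) / \<bar>c\<bar>"
    using False by (simp add: field_simps power2_eq_square)
  finally show ?thesis
    using False by (simp add: field_simps)
qed

lemma fejer_const_pos: "fejer_const > 0"
proof -
  have lower: "1/9 \<le> fejer 1 x" if "x \<in> {2..3}" for x :: real
  proof -
    have "cos x < 0"
      using that pi_gt3 pi_less_4 by (intro cos_lt_zero_pi) auto
    moreover have "0 < x\<^sup>2" "x\<^sup>2 \<le> 9"
      using that by (auto simp: power2_eq_square intro: order.trans[OF mult_mono[of x 3 x 3]])
    ultimately show ?thesis
      by (simp add: fejer_def divide_simps)
  qed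
  moreover have "integrable lborel (\<lambda>x. indicator {2..3::real} x * (1/9::real))"
    by (rule integrable_mult_left) (simp add: integrable_indicator_iff)
  moreover have "indicator {2..3} x * (1/9) \<le> fejer 1 x" for x
    using lower[of x] fejer_nonneg[of 1 x]
    by (cases "x \<in> {2..3}") simp_all
  ultimately have "integral\<^sup>L lborel (\<lambda>x. indicator {2..3::real} x * (1/9::real)) \<le> integral\<^sup>L lborel (fejer 1)"
    by (intro integral_mono integrable_fejer)
  then show ?thesis
    unfolding fejer_const_def by simp
qed

lemma fejer_mult_cos:
  "fejer pi x * cos (2 * pi * \<eta> * x)
     = (fejer (pi + 2 * pi * \<eta>) x + fejer (pi - 2 * pi * \<eta>) x) / 2 - fejer (2 * pi * \<eta>) x"
proof -
  have product: "(1 - cos a) * cos b = (1 - cos (a + b)) / 2 + (1 - cos (a - b)) / 2 - (1 - cos b)" for a b :: real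
    by (simp add: cos_add cos_diff field_simps)
  have "fejer pi x * cos (2 * pi * \<eta> * x) = ((1 - cos (pi * x)) * cos (2 * pi * \<eta> * x)) / x\<^sup>2"
    by (simp add: fejer_def)
  also have "\<dots> = ((1 - cos (pi * x + 2 * pi * \<eta> * x)) / 2 + (1 - cos (pi * x - 2 * pi * \<eta> * x)) / 2
      - (1 - cos (2 * pi * \<eta> * x))) / x\<^sup>2"
    by (simp only: product)
  also have "\<dots> = (fejer (pi + 2 * pi * \<eta>) x + fejer (pi - 2 * pi * \<eta>) x) / 2 - fejer (2 * pi * \<eta>) x"
    by (simp add: fejer_def ring_distribs add_divide_distrib diff_divide_distrib mult.assoc mult.left_commute)
  finally show ?thesis .
qed

lemma integral_fejer_mult_cos:
  "(\<integral>x. fejer pi x * cos (2 * pi * \<eta> * x) \<partial>lborel) = pi * fejer_const * max 0 (1 - 2 * \<bar>\<eta>\<bar>)"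
proof -
  have abs_pi_mult: "\<bar>pi * a\<bar> = pi * \<bar>a\<bar>" for a
    by (simp add: abs_mult)
  have "(\<integral>x. fejer pi x * cos (2 * pi * \<eta> * x) \<partial>lborel)
      = fejer_const * ((\<bar>pi * (1 + 2 * \<eta>)\<bar> + \<bar>pi * (1 - 2 * \<eta>)\<bar>) / 2 - \<bar>pi * (2 * \<eta>)\<bar>)"
    unfolding fejer_mult_cos
    by (simp add: integrable_fejer integral_fejer field_simps)
  also have "\<dots> = pi * fejer_const * ((\<bar>1 + 2 * \<eta>\<bar> + \<bar>1 - 2 * \<eta>\<bar>) / 2 - 2 * \<bar>\<eta>\<bar>)"
    unfolding abs_pi_mult by (simp add: abs_mult algebra_simps)
  also have "(\<bar>1 + 2 * \<eta>\<bar> + \<bar>1 - 2 * \<eta>\<bar>) / 2 - 2 * \<bar>\<eta>\<bar> = max 0 (1 - 2 * \<bar>\<eta>\<bar>)"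
    by (auto simp: abs_if max_def)
  finally show ?thesis .
qed

lemma integral_fejer_mult_sin: "(\<integral>x. fejer pi x * sin (2 * pi * \<eta> * x) \<partial>lborel) = 0"
proof -
  let ?g = "\<lambda>x. fejer pi x * sin (2 * pi * \<eta> * x)"
  have "integral\<^sup>L lborel ?g = \<bar>-1\<bar> *\<^sub>R integral\<^sup>L lborel (\<lambda>x. ?g (0 + (-1) * x))"
    by (rule lborel_integral_real_affine) simp
  also have "(\<lambda>x. ?g (0 + (-1) * x)) = (\<lambda>x. - ?g x)"
    by (auto simp: fun_eq_iff fejer_def)
  finally show ?thesis
    by simp
qed

definition fejer_entire :: "complex \<Rightarrow> complex" where
  "fejer_entire z = (if z = 0 then of_real (pi\<^sup>2 / 2) else (1 - cos (of_real pi * z)) / z\<^sup>2)"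

lemma sin_over_tendsto_1: "((\<lambda>w::complex. sin w / w) \<longlongrightarrow> 1) (at 0)"
  using DERIV_sin[of 0] unfolding has_field_derivative_iff by simp

lemma fejer_quotient_tendsto:
  "((\<lambda>z::complex. (1 - cos (of_real pi * z)) / z\<^sup>2) \<longlongrightarrow> of_real (pi\<^sup>2 / 2)) (at 0)"
proof -
  have "filterlim (\<lambda>z::complex. of_real pi * z / 2) (at 0) (at 0)"
    by (rule filterlim_atI) (auto intro!: tendsto_eq_intros simp: eventually_at_filter)
  then have "((\<lambda>z::complex. of_real (pi\<^sup>2 / 2) * (sin (of_real pi * z / 2) / (of_real pi * z / 2))\<^sup>2)
      \<longlongrightarrow> of_real (pi\<^sup>2 / 2) * 1\<^sup>2) (at 0)"
    by (intro tendsto_intros filterlim_compose[OF sin_over_tendsto_1])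
  moreover have "\<forall>\<^sub>F z in at (0::complex).
      of_real (pi\<^sup>2 / 2) * (sin (of_real pi * z / 2) / (of_real pi * z / 2))\<^sup>2 = (1 - cos (of_real pi * z)) / z\<^sup>2"
  proof (rule eventually_mono[OF eventually_neq_at_within[of 0 0]])
    fix z :: complex
    assume "z \<noteq> 0"
    have "cos (of_real pi * z) = 1 - 2 * sin (of_real pi * z / 2) ^ 2"
      using cos_double_sin[of "of_real pi * z / 2"] by simp
    then show "of_real (pi\<^sup>2 / 2) * (sin (of_real pi * z / 2) / (of_real pi * z / 2))\<^sup>2
        = (1 - cos (of_real pi * z)) / z\<^sup>2"
      using \<open>z \<noteq> 0\<close> by (simp add: field_simps power2_eq_square)
  qed
  ultimately show ?thesis
    by (auto intro: Lim_transform_eventually)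
qed

lemma holomorphic_fejer_entire: "fejer_entire holomorphic_on UNIV"
proof -
  have "(\<lambda>z. (1 - cos (of_real pi * z)) / z\<^sup>2) holomorphic_on UNIV - {0}"
    by (intro holomorphic_intros) auto
  from removable_singularity[OF this open_UNIV fejer_quotient_tendsto]
  show ?thesis
    unfolding fejer_entire_def[abs_def] .
qed

lemma continuous_on_fejer_entire: "continuous_on A fejer_entire"
  using holomorphic_fejer_entire holomorphic_on_imp_continuous_on holomorphic_on_subset by blast

lemma borel_measurable_restr_R_fejer_entire [measurable]: "restr_R fejer_entire \<in> borel_measurable borel"
  unfolding restr_R_def
  by (intro borel_measurable_continuous_onI continuous_on_compose2[OF continuous_on_fejer_entire])
    (auto intro: continuous_intros)

lemma fejer_entire_of_real: "x \<noteq> 0 \<Longrightarrow> fejer_entire (of_real x) = of_real (fejer pi x)"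
  by (simp add: fejer_entire_def fejer_def cos_of_real[symmetric])

lemma norm_fejer_entire_le:
  assumes "z \<in> strip" and "Re z \<noteq> 0"
  shows "norm (fejer_entire z) \<le> (1 + exp pi) / (Re z)\<^sup>2"
proof -
  have "norm (cos (of_real pi * z)) \<le> exp \<bar>Im (of_real pi * z)\<bar>"
    using cmod_cos_le_exp[of 1 "of_real pi * z"] by simp
  also have "\<dots> \<le> exp pi"
    using assms(1) by (simp add: strip_def abs_mult)
  finally have "norm (1 - cos (of_real pi * z)) \<le> 1 + exp pi"
    using norm_triangle_ineq4[of 1 "cos (of_real pi * z)"] by simp
  moreover have "(Re z)\<^sup>2 \<le> (norm z)\<^sup>2"
    using power_mono[OF abs_Re_le_cmod[of z] abs_ge_zero, of 2] by simp
  moreover have "z \<noteq> 0"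
    using assms(2) by auto
  ultimately show ?thesis
    using assms(2) by (auto simp: fejer_entire_def norm_divide norm_power intro!: frac_le)
qed

lemma fejer_entire_bounded_on_square:
  obtains B where "B > 0" and "\<And>z. \<bar>Re z\<bar> \<le> 1 \<Longrightarrow> \<bar>Im z\<bar> \<le> 1 \<Longrightarrow> norm (fejer_entire z) \<le> B"
proof -
  define K where "K = {z. \<bar>Re z\<bar> \<le> 1 \<and> \<bar>Im z\<bar> \<le> 1}"
  have "K \<subseteq> cball 0 2"
  proof
    fix z
    assume "z \<in> K"
    then show "z \<in> cball 0 2"
      using cmod_le[of z] by (simp add: K_def)
  qed
  then have "bounded K"
    using bounded_subset by blast
  moreover have "closed K"
    unfolding K_def by (intro closed_Collect_conj closed_Collect_le continuous_intros)
  ultimately have "compact (fejer_entire ` K)"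
    by (intro compact_continuous_image continuous_on_fejer_entire) (simp add: compact_eq_bounded_closed)
  then show ?thesis
    using that compact_imp_bounded bounded_pos unfolding K_def by (metis (no_types, lifting) image_eqI mem_Collect_eq)
qed

lemma fejer_entire_lorentzian_bound:
  obtains M where "\<And>z. z \<in> strip \<Longrightarrow> norm (fejer_entire z) \<le> M * lorentzian (Re z)"
proof -
  obtain B where "B > 0" and B: "\<And>z. \<bar>Re z\<bar> \<le> 1 \<Longrightarrow> \<bar>Im z\<bar> \<le> 1 \<Longrightarrow> norm (fejer_entire z) \<le> B"
    using fejer_entire_bounded_on_square by blast
  have "norm (fejer_entire z) \<le> (2 * B + 2 * (1 + exp pi)) * lorentzian (Re z)" if "z \<in> strip" for z
  proof (cases "\<bar>Re z\<bar> \<le> 1")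
    case True
    then have "\<bar>Im z\<bar> \<le> 1" "1 \<le> 2 * lorentzian (Re z)"
      using that by (auto simp: strip_def abs_square_le_1 intro: one_le_2_lorentzian)
    have "norm (fejer_entire z) \<le> B * 1"
      using B[OF True \<open>\<bar>Im z\<bar> \<le> 1\<close>] by simp
    also have "\<dots> \<le> B * (2 * lorentzian (Re z))"
      using \<open>B > 0\<close> \<open>1 \<le> 2 * lorentzian (Re z)\<close> by (intro mult_left_mono) auto
    also have "\<dots> \<le> (2 * B + 2 * (1 + exp pi)) * lorentzian (Re z)"
      using lorentzian_pos[of "Re z"] by (simp add: algebra_simps)
    finally show ?thesis .
  next
    case False
    then have "Re z \<noteq> 0" "1 \<le> (Re z)\<^sup>2"
      by (auto simp: abs_square_le_1[symmetric] abs_le_square_iff)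
    have "norm (fejer_entire z) \<le> (1 + exp pi) * (1 / (Re z)\<^sup>2)"
      using norm_fejer_entire_le[OF that \<open>Re z \<noteq> 0\<close>] by simp
    also have "\<dots> \<le> (1 + exp pi) * (2 * lorentzian (Re z))"
      using inverse_square_le_2_lorentzian[OF \<open>1 \<le> (Re z)\<^sup>2\<close>] by (intro mult_left_mono) auto
    also have "\<dots> \<le> (2 * B + 2 * (1 + exp pi)) * lorentzian (Re z)"
      using \<open>B > 0\<close> lorentzian_pos[of "Re z"] by (simp add: algebra_simps)
    finally show ?thesis .
  qed
  then show ?thesis
    using that by blast
qed

lemma integrable_restr_R_fejer_entire: "integrable lborel (restr_R fejer_entire)"
proof -
  obtain M where M: "\<And>z. z \<in> strip \<Longrightarrow> norm (fejer_entire z) \<le> M * lorentzian (Re z)"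
    using fejer_entire_lorentzian_bound by blast
  have "norm (restr_R fejer_entire x) \<le> M * lorentzian x" for x
    using M[of "of_real x"] by (simp add: restr_R_def)
  then show ?thesis
    by (rule integrable_lorentzian_bound[OF borel_measurable_restr_R_fejer_entire])
qed

lemma fourier_integral_fejer_entire:
  "fourier_integral (restr_R fejer_entire) \<eta> = of_real (pi * fejer_const * max 0 (1 - 2 * \<bar>\<eta>\<bar>))"
proof -
  define c where "c x = fejer pi x * cos (2 * pi * \<eta> * x)" for x
  define s where "s x = fejer pi x * sin (2 * pi * \<eta> * x)" for x
  have int: "integrable lborel c" "integrable lborel s"
    unfolding c_def s_def
    by (auto intro!: Bochner_Integration.integrable_bound[OF integrable_fejer[of pi]] AE_I2 mult_left_le
        simp: abs_mult fejer_nonneg abs_cos_le_one abs_sin_le_one)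
  have "fourier_integral (restr_R fejer_entire) \<eta> = (\<integral>x. of_real (c x) - \<i> * of_real (s x) \<partial>lborel)"
    unfolding fourier_integral_def
  proof (rule integral_cong_AE)
    show "AE x in lborel. restr_R fejer_entire x * cis (- 2 * pi * x * \<eta>) = of_real (c x) - \<i> * of_real (s x)"
      using AE_lborel_singleton[of 0]
      by eventually_elim
        (simp add: restr_R_def fejer_entire_of_real c_def s_def complex_eq_iff mult_ac)
  qed (auto simp: c_def s_def)
  also have "\<dots> = of_real (integral\<^sup>L lborel c) - \<i> * of_real (integral\<^sup>L lborel s)"
    using int by (simp add: complex_of_real_integrable_eq)
  also have "\<dots> = of_real (pi * fejer_const * max 0 (1 - 2 * \<bar>\<eta>\<bar>))"
    unfolding c_def s_def integral_fejer_mult_cos integral_fejer_mult_sin by simp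
  finally show ?thesis .
qed

lemma fourier_integral_fejer_entire_eq_0:
  "1/2 \<le> \<bar>\<eta>\<bar> \<Longrightarrow> fourier_integral (restr_R fejer_entire) \<eta> = 0"
  unfolding fourier_integral_fejer_entire by simp

lemma fourier_integral_fejer_entire_at_0: "fourier_integral (restr_R fejer_entire) 0 = of_real (pi * fejer_const)"
  by (simp add: fourier_integral_fejer_entire)

section \<open>A Blaschke factor on the strip\<close>

definition qexp :: "complex \<Rightarrow> complex" where
  "qexp z = exp (2 * of_real pi * \<i> * z)"

lemma qexp_of_real: "qexp (of_real x) = cis (2 * pi * x)"
  by (simp add: qexp_def cis_conv_exp mult_ac)

lemma norm_qexp: "norm (qexp z) = exp (- 2 * pi * Im z)"
  by (simp add: qexp_def norm_exp_eq_Re)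

lemma norm_qexp_le:
  assumes "z \<in> strip"
  shows "norm (qexp z) \<le> exp (2 * pi)"
proof -
  have "pi * (- Im z) \<le> pi * 1"
    using assms by (intro mult_left_mono) (auto simp: strip_def abs_less_iff)
  then show ?thesis
    unfolding norm_qexp by simp
qed

definition blaschke :: "real \<Rightarrow> complex \<Rightarrow> complex" where
  "blaschke r z = (qexp z - of_real r) / (1 - of_real r * qexp z)"

lemma norm_blaschke_of_real:
  assumes "\<bar>r\<bar> < 1"
  shows "norm (blaschke r (of_real x)) = 1"
proof -
  define q where "q = qexp (of_real x)"
  have "norm q = 1"
    by (simp add: q_def qexp_of_real)
  then have "q * cnj q = 1"
    by (simp add: complex_norm_square[symmetric])
  then have "q - of_real r = q * cnj (1 - of_real r * q)"
    by (simp add: algebra_simps)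
  then have "norm (q - of_real r) = norm (1 - of_real r * q)"
    by (simp only: norm_mult complex_mod_cnj \<open>norm q = 1\<close> mult_1)
  moreover have "1 - of_real r * q \<noteq> 0"
    using assms \<open>norm q = 1\<close> by (auto simp: norm_mult dest: arg_cong[of _ _ norm])
  ultimately show ?thesis
    by (simp add: blaschke_def q_def norm_divide)
qed

lemma norm_blaschke_denominator_ge:
  assumes "0 \<le> r" and "z \<in> strip"
  shows "1 - r * exp (2 * pi) \<le> norm (1 - of_real r * qexp z)"
proof -
  have "norm (of_real r * qexp z) \<le> r * exp (2 * pi)"
    using assms norm_qexp_le[OF assms(2)] by (simp add: norm_mult mult_left_mono)
  then show ?thesis
    using norm_triangle_ineq2[of 1 "of_real r * qexp z"] by simp
qed

lemma holomorphic_blaschke: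
  assumes "0 \<le> r" and "r < exp (- 2 * pi)"
  shows "blaschke r holomorphic_on strip"
proof -
  have "1 - r * exp (2 * pi) > 0"
    using assms by (simp add: exp_minus field_simps)
  then have "1 - of_real r * qexp z \<noteq> 0" if "z \<in> strip" for z
    using norm_blaschke_denominator_ge[OF assms(1) that] by auto
  then show ?thesis
    unfolding blaschke_def[abs_def] qexp_def by (intro holomorphic_intros) (auto simp: qexp_def)
qed

lemma blaschke_bounded:
  assumes "0 \<le> r" and "r < exp (- 2 * pi)"
  obtains M where "\<And>z. z \<in> strip \<Longrightarrow> norm (blaschke r z) \<le> M"
proof
  fix z
  assume "z \<in> strip"
  have "1 - r * exp (2 * pi) > 0"
    using assms by (simp add: exp_minus field_simps)
  moreover have "norm (qexp z - of_real r) \<le> exp (2 * pi) + r"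
    using norm_triangle_ineq4[of "qexp z" "of_real r"] norm_qexp_le[OF \<open>z \<in> strip\<close>] assms(1) by simp
  ultimately show "norm (blaschke r z) \<le> (exp (2 * pi) + r) / (1 - r * exp (2 * pi))"
    unfolding blaschke_def norm_divide
    using norm_blaschke_denominator_ge[OF assms(1) \<open>z \<in> strip\<close>] assms(1)
    by (intro frac_le) auto
qed

definition blaschke_coeff :: "real \<Rightarrow> nat \<Rightarrow> complex" where
  "blaschke_coeff r k = (if k = 0 then - of_real r else of_real ((1 - r\<^sup>2) * r ^ (k - 1)))"

lemma blaschke_coeff_sums:
  assumes "norm (of_real r * q) < 1"
  shows "(\<lambda>k. blaschke_coeff r k * q ^ k) sums ((q - of_real r) / (1 - of_real r * q))"
proof -
  have "1 - of_real r * q \<noteq> 0"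
    using assms by auto
  have "(\<lambda>k. (of_real (1 - r\<^sup>2) * q) * (of_real r * q) ^ k)
      sums ((of_real (1 - r\<^sup>2) * q) * (1 / (1 - of_real r * q)))"
    by (intro sums_mult geometric_sums assms)
  moreover have "(\<lambda>k. (of_real (1 - r\<^sup>2) * q) * (of_real r * q) ^ k)
      = (\<lambda>k. blaschke_coeff r (Suc k) * q ^ Suc k)"
    by (simp add: blaschke_coeff_def fun_eq_iff power_mult_distrib)
  ultimately have "(\<lambda>k. blaschke_coeff r (Suc k) * q ^ Suc k)
      sums ((of_real (1 - r\<^sup>2) * q) * (1 / (1 - of_real r * q)))"
    by simp
  from sums_Suc_iff[of "\<lambda>k. blaschke_coeff r k * q ^ k", THEN iffD1, OF this]
  have "(\<lambda>k. blaschke_coeff r k * q ^ k)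
      sums ((of_real (1 - r\<^sup>2) * q) * (1 / (1 - of_real r * q)) + blaschke_coeff r 0 * q ^ 0)" .
  also have "(of_real (1 - r\<^sup>2) * q) * (1 / (1 - of_real r * q)) + blaschke_coeff r 0 * q ^ 0
      = (q - of_real r) / (1 - of_real r * q)"
    using \<open>1 - of_real r * q \<noteq> 0\<close> by (simp add: blaschke_coeff_def field_simps power2_eq_square)
  finally show ?thesis .
qed

lemma summable_norm_blaschke_coeff:
  assumes "\<bar>r\<bar> < 1"
  shows "summable (\<lambda>k. norm (blaschke_coeff r k))"
proof -
  have "summable (\<lambda>k. \<bar>1 - r\<^sup>2\<bar> * \<bar>r\<bar> ^ k)"
    using assms by (intro summable_mult summable_geometric) simp
  moreover have "norm (blaschke_coeff r (Suc k)) = \<bar>1 - r\<^sup>2\<bar> * \<bar>r\<bar> ^ k" for k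
    unfolding blaschke_coeff_def by (simp add: abs_mult power_abs del: of_real_mult of_real_power)
  ultimately have "summable (\<lambda>k. norm (blaschke_coeff r (Suc k)))"
    by simp
  then show ?thesis
    by (rule summable_Suc_iff[THEN iffD1])
qed

lemma blaschke_fourier_series:
  assumes "\<bar>r\<bar> < 1"
  shows "(\<lambda>k. (blaschke_coeff r k * cis (2 * pi * k * s)) * cis (2 * pi * k * x))
           sums blaschke r (of_real x + of_real s)"
proof -
  define q where "q = qexp (of_real (x + s))"
  have "q ^ k = cis (2 * pi * k * s) * cis (2 * pi * k * x)" for k
  proof -
    have "q ^ k = cis (real k * (2 * pi * (x + s)))"
      unfolding q_def qexp_of_real by (rule Complex.DeMoivre)
    then show ?thesis
      by (simp add: cis_mult algebra_simps)
  qed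
  moreover have "norm (of_real r * q) < 1"
    using assms unfolding q_def qexp_of_real by (simp add: norm_mult)
  ultimately show ?thesis
    using blaschke_coeff_sums[of r q] by (simp add: blaschke_def q_def mult_ac)
qed

section \<open>The Pauli partners\<close>

lemma floor_add_half_eq:
  fixes k :: nat
  assumes "\<bar>\<xi> - real k\<bar> < 1/2"
  shows "\<lfloor>\<xi> + 1/2\<rfloor> = int k"
proof -
  have "- (1/2) < \<xi> - real k" "\<xi> - real k < 1/2"
    using assms by linarith+
  then show ?thesis
    by (simp add: floor_eq_iff)
qed

lemma cis_2pi_eq_imp_eq:
  assumes "s \<in> {0..<1}" and "t \<in> {0..<1}" and "cis (2 * pi * s) = cis (2 * pi * t)"
  shows "s = t"
proof -
  have "cis (2 * pi * (s - t)) = 1"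
    using assms(3) by (simp add: right_diff_distrib flip: cis_divide)
  then have "cos (2 * pi * (s - t)) = 1"
    by (metis cis.simps(1) one_complex.simps(1))
  then obtain n :: int where "2 * pi * (s - t) = real_of_int n * 2 * pi"
    by (auto simp: cos_one_2pi_int)
  then have "s - t = real_of_int n"
    by simp
  moreover have "\<bar>s - t\<bar> < 1"
    using assms(1,2) by auto
  ultimately show ?thesis
    by (cases "n = 0") auto
qed

locale pauli_partners =
  fixes r :: real
  assumes r_pos: "0 < r"
    and r_small: "r < exp (- 2 * pi)"
      \<comment> \<open>so that the pole of the Blaschke factor, where \<open>|qexp z| = 1 / r\<close>, lies below the strip\<close>
begin

lemma r_lt_1: "r < 1"
proof -
  have "exp (- 2 * pi) < 1"
    using pi_gt_zero by simp
  then show ?thesis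
    using r_small by linarith
qed

definition partner :: "real \<Rightarrow> complex \<Rightarrow> complex" where
  "partner s z = fejer_entire z * blaschke r (z + of_real s)"

lemma holomorphic_partner: "partner s holomorphic_on strip"
proof -
  have "blaschke r \<circ> (\<lambda>z. z + of_real s) holomorphic_on strip"
    using holomorphic_blaschke[OF less_imp_le[OF r_pos] r_small] add_of_real_in_strip
    by (intro holomorphic_on_compose_gen[where t = strip] holomorphic_intros) auto
  then show ?thesis
    unfolding partner_def[abs_def] o_def
    by (intro holomorphic_on_mult holomorphic_on_subset[OF holomorphic_fejer_entire]) auto
qed

lemma partner_lorentzian_bound:
  obtains M where "\<And>z. z \<in> strip \<Longrightarrow> norm (partner s z) \<le> M * lorentzian (Re z)"
proof -
  obtain MB where MB: "\<And>z. z \<in> strip \<Longrightarrow> norm (fejer_entire z) \<le> MB * lorentzian (Re z)"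
    using fejer_entire_lorentzian_bound by blast
  obtain MU where MU: "\<And>z. z \<in> strip \<Longrightarrow> norm (blaschke r z) \<le> MU"
    using blaschke_bounded[OF less_imp_le[OF r_pos] r_small] by blast
  have "norm (partner s z) \<le> (MB * MU) * lorentzian (Re z)" if "z \<in> strip" for z
  proof -
    have "norm (partner s z) \<le> (MB * lorentzian (Re z)) * MU"
      unfolding partner_def norm_mult
      using MB[OF that] MU[OF add_of_real_in_strip[OF that]] order.trans[OF norm_ge_zero MB[OF that]]
      by (intro mult_mono) auto
    then show ?thesis
      by (simp add: mult_ac)
  qed
  then show ?thesis
    using that by blast
qed

lemma partner_in_H2_strip: "partner s \<in> H2_strip"
  using partner_lorentzian_bound
  by (metis H2_stripI_lorentzian_bound holomorphic_partner)

lemma is_fourier_L2_partner: "is_fourier_L2 (restr_R (partner s)) (fourier_integral (restr_R (partner s)))"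
  using partner_lorentzian_bound
  by (metis is_fourier_L2_lorentzian_bound holomorphic_partner)

lemma norm_partner_of_real: "norm (partner s (of_real x)) = norm (fejer_entire (of_real x))"
  using norm_blaschke_of_real[of r "x + s"] r_pos r_lt_1
  by (simp add: partner_def norm_mult)

lemma fourier_partner_sums:
  "(\<lambda>k. blaschke_coeff r k * cis (2 * pi * k * s) * fourier_integral (restr_R fejer_entire) (\<xi> - real k))
     sums fourier_integral (restr_R (partner s)) \<xi>"
proof -
  have "summable (\<lambda>k. norm (blaschke_coeff r k * cis (2 * pi * k * s)))"
    using summable_norm_blaschke_coeff[of r] r_pos r_lt_1 by (simp add: norm_mult)
  then show ?thesis
    using fourier_integral_mult_fourier_series[OF integrable_restr_R_fejer_entire,
        where h = "\<lambda>x. blaschke r (of_real x + of_real s)"]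
      blaschke_fourier_series[of r s] r_pos r_lt_1
    by (simp add: partner_def restr_R_def[abs_def])
qed

(* Only the term with k nearest to xi survives in fourier_partner_sums, since the Fourier
   transform of the Fejer function vanishes outside (-1/2, 1/2). *)
lemma fourier_partner_shift:
  "fourier_integral (restr_R (partner s)) \<xi>
     = cis (2 * pi * \<lfloor>\<xi> + 1/2\<rfloor> * s) * fourier_integral (restr_R (partner 0)) \<xi>"
proof -
  let ?F = "fourier_integral (restr_R fejer_entire)"
  let ?c = "cis (2 * pi * \<lfloor>\<xi> + 1/2\<rfloor> * s)"
  have "(\<lambda>k. blaschke_coeff r k * cis (2 * pi * k * s) * ?F (\<xi> - real k))
      = (\<lambda>k. ?c * (blaschke_coeff r k * cis (2 * pi * k * 0) * ?F (\<xi> - real k)))"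
  proof (rule ext)
    fix k
    show "blaschke_coeff r k * cis (2 * pi * k * s) * ?F (\<xi> - real k)
      = ?c * (blaschke_coeff r k * cis (2 * pi * k * 0) * ?F (\<xi> - real k))"
    proof (cases "\<bar>\<xi> - real k\<bar> < 1/2")
      case True
      then show ?thesis
        by (simp add: floor_add_half_eq)
    next
      case False
      then show ?thesis
        by (simp add: fourier_integral_fejer_entire_eq_0)
    qed
  qed
  then have "(\<lambda>k. blaschke_coeff r k * cis (2 * pi * k * s) * ?F (\<xi> - real k))
      sums (?c * fourier_integral (restr_R (partner 0)) \<xi>)"
    using sums_mult[OF fourier_partner_sums[of 0 \<xi>], of ?c] by simp
  then show ?thesis
    using fourier_partner_sums[of s \<xi>] sums_unique2 by blast
qed

lemma fourier_partner_at_0: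
  "fourier_integral (restr_R (partner 0)) 0 = - of_real (r * (pi * fejer_const))" (is "_ = ?rhs")
proof -
  let ?F = "fourier_integral (restr_R fejer_entire)"
  have "?F (0 - real k) = 0" if "k \<noteq> 0" for k
    using that by (intro fourier_integral_fejer_entire_eq_0) simp
  then have terms: "(\<lambda>k. blaschke_coeff r k * cis (2 * pi * k * 0) * ?F (0 - real k))
      = (\<lambda>k. if k = 0 then ?rhs else 0)"
    by (auto simp: fun_eq_iff blaschke_coeff_def fourier_integral_fejer_entire_at_0)
  have "(\<lambda>k. blaschke_coeff r k * cis (2 * pi * k * 0) * ?F (0 - real k)) sums ?rhs"
    unfolding terms by (rule sums_single)
  then show ?thesis
    by (rule sums_unique2[OF fourier_partner_sums[of 0 0]])
qed

lemma fourier_partner_at_1: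
  "fourier_integral (restr_R (partner 0)) 1 = of_real ((1 - r\<^sup>2) * (pi * fejer_const))" (is "_ = ?rhs")
proof -
  let ?F = "fourier_integral (restr_R fejer_entire)"
  have "?F (1 - real k) = 0" if "k \<noteq> 1" for k
    using that by (intro fourier_integral_fejer_entire_eq_0) (cases "k = 0"; simp)
  then have terms: "(\<lambda>k. blaschke_coeff r k * cis (2 * pi * k * 0) * ?F (1 - real k))
      = (\<lambda>k. if k = 1 then ?rhs else 0)"
    by (auto simp: fun_eq_iff blaschke_coeff_def fourier_integral_fejer_entire_at_0)
  have "(\<lambda>k. blaschke_coeff r k * cis (2 * pi * k * 0) * ?F (1 - real k)) sums ?rhs"
    unfolding terms by (rule sums_single)
  then show ?thesis
    by (rule sums_unique2[OF fourier_partner_sums[of 0 1]])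
qed

lemma partner_proportional_imp_eq:
  assumes "s \<in> {0..<1}" and "t \<in> {0..<1}" and "\<forall>z\<in>strip. partner s z = c * partner t z"
  shows "s = t"
proof -
  have "restr_R (partner s) = (\<lambda>x. c * restr_R (partner t) x)"
    using assms(3) by (auto simp: restr_R_def)
  then have scaled: "fourier_integral (restr_R (partner s)) \<xi> = c * fourier_integral (restr_R (partner t)) \<xi>" for \<xi>
    by (simp add: fourier_integral_cmult)
  have "\<lfloor>(0::real) + 1/2\<rfloor> = 0" "\<lfloor>(1::real) + 1/2\<rfloor> = 1"
    by (simp_all add: floor_eq_iff)
  then have at_0: "fourier_integral (restr_R (partner u)) 0 = fourier_integral (restr_R (partner 0)) 0"
    and at_1: "fourier_integral (restr_R (partner u)) 1 = cis (2 * pi * u) * fourier_integral (restr_R (partner 0)) 1"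
    for u
    using fourier_partner_shift[of u 0] fourier_partner_shift[of u 1] by simp_all
  have "r * r < 1 * 1"
    using r_pos r_lt_1 by (intro mult_strict_mono) auto
  then have "fejer_const \<noteq> 0" "r \<noteq> 0" "1 - r\<^sup>2 \<noteq> 0"
    using fejer_const_pos r_pos by (auto simp: power2_eq_square)
  then have "fourier_integral (restr_R (partner 0)) 0 \<noteq> 0" "fourier_integral (restr_R (partner 0)) 1 \<noteq> 0"
    unfolding fourier_partner_at_0 fourier_partner_at_1 neg_equal_0_iff_equal of_real_eq_0_iff
    by simp_all
  then have "c = 1"
    using scaled[of 0] unfolding at_0[of s] at_0[of t] by simp
  then have "cis (2 * pi * s) = cis (2 * pi * t)"
    using scaled[of 1] \<open>fourier_integral (restr_R (partner 0)) 1 \<noteq> 0\<close> unfolding at_1[of s] at_1[of t] by simp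
  then show ?thesis
    using assms(1,2) by (rule cis_2pi_eq_imp_eq[rotated 2])
qed

end

interpretation pauli_partners "exp (-8)"
  by standard (use pi_less_4 in auto)

theorem theorem4p2:
  shows "\<exists>f \<in> H2_strip. \<exists>P \<subseteq> H2_strip.
           uncountable P \<and> (\<forall>g \<in> P. pauli_partner f g) \<and>
           (\<forall>g1 \<in> P. \<forall>g2 \<in> P. g1 \<noteq> g2 \<longrightarrow>
              \<not> (\<exists>c::complex. \<forall>z \<in> strip. g1 z = c * g2 z))"
proof -
  have "inj_on partner {0..<1}"
    by (intro inj_onI partner_proportional_imp_eq[where c = 1]) auto
  then have "uncountable (partner ` {0..<1})"
    using uncountable_half_open_interval_1[of 0 1] countable_image_inj_on by auto
  moreover have "pauli_partner (partner 0) (partner s)" for s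
    unfolding pauli_partner_def
    by (intro conjI allI exI[of _ "fourier_integral (restr_R (partner 0))"]
        exI[of _ "fourier_integral (restr_R (partner s))"] is_fourier_L2_partner)
      (simp_all add: norm_partner_of_real fourier_partner_shift[of s] norm_mult)
  moreover have "\<not> (\<exists>c. \<forall>z\<in>strip. partner s z = c * partner t z)"
    if "s \<in> {0..<1}" "t \<in> {0..<1}" "partner s \<noteq> partner t" for s t
    using that partner_proportional_imp_eq by blast
  ultimately show ?thesis
    using partner_in_H2_strip by (intro bexI[of _ "partner 0"] exI[of _ "partner ` {0..<1}"]) auto
qed

end
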